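(* Let $\mu$ be a Borel probability measure on $\mathbb{R}^m$ and let $\nu=\sum_{i=1}^k a_i\delta_{x_i}$ with $k\in\mathbb{N}$, $x_i\in\mathbb{R}^m$, $a_i>0$, $\sum_{i=1}^k a_i=1$. Then $D_0(\mu*\nu)=D_0(\mu)$.
   Context: $\delta_x$ is the Dirac measure at $x$. The convolution $\mu*\nu$ is the push-forward of $\mu\times\nu$ under $(x,y)\mapsto x+y$. For a finite Borel measure $\lambda$, $e_n(\lambda)=\exp\inf\{\int\log d(x,A)\,d\lambda(x):A\subset\mathbb{R}^m,\ \mathrm{Card}(A)\le n\}$ and the quantization dimension of order zero is $D_0(\lambda)=\lim_{n\to\infty}\frac{\log n}{-\log e_n(\lambda)}$; throughout it is assumed that these quantization dimensions exist whenever they occur. *)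

theory Defs
  imports "HOL-Analysis.Analysis" "HOL-Probability.Probability"
begin

definition eln :: "real \<Rightarrow> ereal" where
  "eln d = (if d \<le> 0 then -\<infinity> else ereal (ln d))"

text \<open>Integral of an ereal-valued function as positive part minus negative part
  (with the ereal convention infinity - infinity = infinity).\<close>
definition ereal_integral :: "'a measure \<Rightarrow> ('a \<Rightarrow> ereal) \<Rightarrow> ereal" where
  "ereal_integral M f =
     enn2ereal (\<integral>\<^sup>+ x. e2ennreal (max 0 (f x)) \<partial>M)
   - enn2ereal (\<integral>\<^sup>+ x. e2ennreal (max 0 (- f x)) \<partial>M)"

definition log_quant_error :: "'a::euclidean_space measure \<Rightarrow> nat \<Rightarrow> ereal" where
  "log_quant_error L n =
     (INF A \<in> {A :: 'a set. finite A \<and> A \<noteq> {} \<and> card A \<le> n}.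
        ereal_integral L (\<lambda>x. eln (infdist x A)))"

definition quant_error :: "'a::euclidean_space measure \<Rightarrow> nat \<Rightarrow> ereal" where
  "quant_error L n = (case log_quant_error L n of
      ereal r \<Rightarrow> ereal (exp r) | PInfty \<Rightarrow> \<infinity> | MInfty \<Rightarrow> 0)"

definition D0_seq :: "'a::euclidean_space measure \<Rightarrow> nat \<Rightarrow> ereal" where
  "D0_seq L n = ereal (ln (real n)) / (- log_quant_error L n)"

definition has_quant_dim0 :: "'a::euclidean_space measure \<Rightarrow> ereal \<Rightarrow> bool" where
  "has_quant_dim0 L D \<longleftrightarrow> (D0_seq L \<longlonglongrightarrow> D)"

definition discrete_measure :: "nat \<Rightarrow> (nat \<Rightarrow> real) \<Rightarrow> (nat \<Rightarrow> 'a::topological_space) \<Rightarrow> 'a measure" where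
  "discrete_measure k a x =
     measure_of UNIV (sets borel) (\<lambda>A. ennreal (\<Sum>i<k. a i * indicator A (x i)))"

end

theory Submission
  imports Defs "HOL-Real_Asymp.Real_Asymp"
begin

text \<open>Write F n = log e_n(mu) and G n = log e_n(mu * nu). Integrating against mu * nu averages,
  with weights a_i, the integrals against mu of the translates by x_i. Hence a codebook B does no
  better for mu * nu than the best of its translates B - x_i does for mu, so F n <= G n; and the
  union of the k translates A + x_i of a codebook A does at least as well for mu * nu as A does
  for mu, so G (k n) <= F n. Both sequences decrease and log (k n) / log n -> 1, so the quotients
  log n / (- F n) and log n / (- G n) have the same limit.\<close>

text \<open>In extended reals l / 0 = \<infinity> for l > 0, so t \<mapsto> l / - t increases on [-\<infinity>, 0] and on
  (0, \<infinity>] separately but drops at 0.\<close>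
lemma ereal_divide_uminus_mono:
  fixes y z :: ereal
  assumes "l > 0" "y \<le> z" "z \<le> 0 \<or> 0 < y"
  shows "ereal l / - y \<le> ereal l / - z"
  using assms
  by (cases y; cases z) (auto simp: divide_ereal_def field_simps intro: mult_left_mono)

lemma eventually_interleaved_same_sign:
  fixes F G :: "nat \<Rightarrow> ereal"
  assumes k: "k \<ge> 1" and F: "decseq F" and G: "decseq G"
    and FG: "\<And>n. F n \<le> G n" and GF: "\<And>n. G (k * n) \<le> F n"
  shows "eventually (\<lambda>n. (G n \<le> 0 \<or> 0 < F n) \<and> (F n \<le> 0 \<or> 0 < G (k * n))) sequentially"
proof (cases "\<exists>N. F N \<le> 0")
  case True
  then obtain N where N: "F N \<le> 0" by blast
  show ?thesis
    using eventually_ge_at_top[of "k * N"]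
  proof eventually_elim
    case (elim n)
    have "G n \<le> G (k * N)" using G elim by (rule decseqD)
    also have "\<dots> \<le> F N" by (rule GF)
    finally have "G n \<le> 0" using N by simp
    moreover have "N \<le> n" using k elim by (metis le_trans mult_1 mult_le_mono1)
    then have "F n \<le> 0" using decseqD[OF F] N by (metis order.trans)
    ultimately show ?case by simp
  qed
next
  case False
  then have F_pos: "0 < F n" for n by (simp add: not_le)
  have "0 < G n" for n using F_pos FG by (rule order.strict_trans2)
  with F_pos show ?thesis by simp
qed

lemma interleaved_ln_div_limits_eq:
  fixes F G :: "nat \<Rightarrow> ereal"
  assumes k: "k \<ge> 1" and "decseq F" "decseq G"
    and FG: "\<And>n. F n \<le> G n" and GF: "\<And>n. G (k * n) \<le> F n"
    and F_lim: "(\<lambda>n. ereal (ln (real n)) / - F n) \<longlonglongrightarrow> D"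
    and G_lim: "(\<lambda>n. ereal (ln (real n)) / - G n) \<longlonglongrightarrow> D'"
  shows "D' = D"
proof -
  have sign: "eventually (\<lambda>n. (G n \<le> 0 \<or> 0 < F n) \<and> (F n \<le> 0 \<or> 0 < G (k * n))) sequentially"
    by (rule eventually_interleaved_same_sign) fact+
  have "D \<le> D'"
  proof (rule tendsto_le[OF trivial_limit_sequentially G_lim F_lim])
    show "eventually (\<lambda>n. ereal (ln (real n)) / - F n \<le> ereal (ln (real n)) / - G n) sequentially"
      using sign eventually_gt_at_top[of 1]
    proof eventually_elim
      case (elim n)
      then show ?case by (intro ereal_divide_uminus_mono FG) auto
    qed
  qed
  moreover have "D' \<le> D"
  proof -
    have "strict_mono (\<lambda>n. k * n)" using k by (simp add: strict_mono_def)
    from filterlim_compose[OF G_lim filterlim_subseq[OF this]]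
    have G_sub: "(\<lambda>n. ereal (ln (real (k * n))) / - G (k * n)) \<longlonglongrightarrow> D'" by simp
    have "(\<lambda>n. ln (real (k * n)) / ln (real n)) \<longlonglongrightarrow> 1" using k by real_asymp
    then have "(\<lambda>n. ereal (ln (real (k * n)) / ln (real n)) * (ereal (ln (real n)) / - F n))
        \<longlonglongrightarrow> 1 * D"
      by (intro tendsto_mult_ereal F_lim) (auto simp: one_ereal_def)
    moreover have "eventually (\<lambda>n. ereal (ln (real (k * n))) / - G (k * n)
        \<le> ereal (ln (real (k * n)) / ln (real n)) * (ereal (ln (real n)) / - F n)) sequentially"
      using sign eventually_gt_at_top[of 1]
    proof eventually_elim
      case (elim n)
      have n: "1 < real n" using elim by simp
      then have "ln (real n) > 0" by simp
      have "real n \<le> real (k * n)" using k by (intro of_nat_mono) simp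
      with n have "ln (real (k * n)) > 0" by (metis ln_gt_zero order.strict_trans2)
      then have "ereal (ln (real (k * n))) / - G (k * n) \<le> ereal (ln (real (k * n))) / - F n"
        using elim by (intro ereal_divide_uminus_mono GF) auto
      also have "\<dots> = ereal (ln (real (k * n)) / ln (real n)) * (ereal (ln (real n)) / - F n)"
        using \<open>ln (real n) > 0\<close> by (simp add: divide_ereal_def mult.assoc[symmetric])
      finally show ?case .
    qed
    ultimately show ?thesis using tendsto_le[OF trivial_limit_sequentially _ G_sub] by simp
  qed
  ultimately show ?thesis by simp
qed

lemma discrete_measure_eq_distr_density:
  fixes x :: "nat \<Rightarrow> 'a::topological_space"
  assumes "\<And>i. i < k \<Longrightarrow> a i \<ge> 0"
  shows "discrete_measure k a x = distr (density (count_space {..<k}) (\<lambda>i. ennreal (a i))) borel x"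
    (is "_ = ?N")
proof -
  have "?N = measure_of UNIV (sets borel) (emeasure ?N)"
    using measure_of_of_measure[of ?N] by simp
  also have "\<dots> = discrete_measure k a x"
    unfolding discrete_measure_def
  proof (rule measure_of_eq)
    fix A :: "'a set" assume "A \<in> sigma_sets UNIV (sets borel)"
    then have A: "A \<in> sets borel" by (metis sets.sigma_sets_eq space_borel)
    have "emeasure ?N A = (\<integral>\<^sup>+ i. indicator A (x i) \<partial>density (count_space {..<k}) (\<lambda>i. ennreal (a i)))"
      using A by (simp add: emeasure_distr nn_integral_indicator[symmetric] nn_integral_distr
          del: nn_integral_indicator)
    also have "\<dots> = (\<Sum>i<k. ennreal (a i) * indicator A (x i))"
      by (simp add: nn_integral_density nn_integral_count_space_finite)
    also have "\<dots> = (\<Sum>i<k. ennreal (a i * indicator A (x i)))"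
      using assms by (intro sum.cong) (auto simp: indicator_def)
    also have "\<dots> = ennreal (\<Sum>i<k. a i * indicator A (x i))"
      using assms by (intro sum_ennreal) auto
    finally show "emeasure ?N A = ennreal (\<Sum>i<k. a i * indicator A (x i))" .
  qed simp
  finally show ?thesis ..
qed

lemma nn_integral_convolution_discrete_measure:
  fixes M :: "'a::ordered_euclidean_space measure"
  assumes "finite_measure M" and sets_M: "sets M = sets borel" and a: "\<And>i. i < k \<Longrightarrow> a i \<ge> 0"
    and [measurable]: "h \<in> borel_measurable borel"
  shows "(\<integral>\<^sup>+ y. h y \<partial>(M \<star> discrete_measure k a x))
    = (\<Sum>i<k. ennreal (a i) * (\<integral>\<^sup>+ z. h (z + x i) \<partial>M))"
proof -
  let ?N = "distr (density (count_space {..<k}) (\<lambda>i. ennreal (a i))) borel x"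
  have "finite_measure ?N"
    by (intro finite_measureI) (simp add: emeasure_distr emeasure_density nn_integral_count_space_finite)
  then have "(\<integral>\<^sup>+ y. h y \<partial>(M \<star> ?N)) = (\<integral>\<^sup>+ z. \<integral>\<^sup>+ y. h (z + y) \<partial>?N \<partial>M)"
    using assms by (intro nn_integral_convolution) auto
  also have "\<dots> = (\<integral>\<^sup>+ z. (\<Sum>i<k. ennreal (a i) * h (z + x i)) \<partial>M)"
    by (intro nn_integral_cong)
      (simp add: nn_integral_distr nn_integral_density nn_integral_count_space_finite)
  also have "\<dots> = (\<Sum>i<k. ennreal (a i) * (\<integral>\<^sup>+ z. h (z + x i) \<partial>M))"
    by (simp add: nn_integral_sum nn_integral_cmult measurable_cong_sets[OF sets_M refl])
  finally show ?thesis using discrete_measure_eq_distr_density[of k a x] a by simp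
qed

definition pos_integral :: "'a measure \<Rightarrow> ('a \<Rightarrow> ereal) \<Rightarrow> ennreal" where
  "pos_integral M f = (\<integral>\<^sup>+ x. e2ennreal (max 0 (f x)) \<partial>M)"

lemma ereal_integral_eq_pos_integral_diff:
  "ereal_integral M f = enn2ereal (pos_integral M f) - enn2ereal (pos_integral M (\<lambda>x. - f x))"
  by (simp add: ereal_integral_def pos_integral_def)

lemma pos_integral_mono: "(\<And>x. f x \<le> g x) \<Longrightarrow> pos_integral M f \<le> pos_integral M g"
  unfolding pos_integral_def by (intro nn_integral_mono e2ennreal_mono max.mono) auto

lemma pos_integral_convolution_discrete_measure:
  fixes M :: "'a::ordered_euclidean_space measure" and f :: "'a \<Rightarrow> ereal"
  assumes "finite_measure M" "sets M = sets borel" "\<And>i. i < k \<Longrightarrow> a i \<ge> 0"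
    and [measurable]: "f \<in> borel_measurable borel"
  shows "pos_integral (M \<star> discrete_measure k a x) f
    = (\<Sum>i<k. ennreal (a i) * pos_integral M (\<lambda>z. f (z + x i)))"
  unfolding pos_integral_def using assms(1-3) by (rule nn_integral_convolution_discrete_measure) measurable

lemma le_ereal_convex_combination:
  fixes c :: ereal and a d :: "nat \<Rightarrow> real"
  assumes "\<And>i. i < k \<Longrightarrow> a i \<ge> 0" "(\<Sum>i<k. a i) = 1" "\<And>i. i < k \<Longrightarrow> c \<le> ereal (d i)"
  shows "c \<le> ereal (\<Sum>i<k. a i * d i)"
proof (cases c)
  case (real r)
  have "r = (\<Sum>i<k. a i * r)" using assms(2) by (simp add: sum_distrib_right[symmetric])
  also have "\<dots> \<le> (\<Sum>i<k. a i * d i)" using assms real by (intro sum_mono mult_left_mono) auto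
  finally show ?thesis using real by simp
next
  case PInf
  have "k \<noteq> 0" using assms(2) by (cases k) auto
  then show ?thesis using assms(3)[of 0] PInf by simp
qed simp

lemma le_convex_combination_ereal_diff:
  fixes P N :: "nat \<Rightarrow> ennreal" and c :: ereal
  assumes a: "\<And>i. i < k \<Longrightarrow> a i > 0" and s: "(\<Sum>i<k. a i) = 1"
    and c: "\<And>i. i < k \<Longrightarrow> c \<le> enn2ereal (P i) - enn2ereal (N i)"
  shows "c \<le> enn2ereal (\<Sum>i<k. ennreal (a i) * P i) - enn2ereal (\<Sum>i<k. ennreal (a i) * N i)"
proof (cases "\<exists>j<k. P j = \<top>")
  case True
  then obtain j where "j < k" "P j = \<top>" by blast
  then have top: "(\<Sum>i<k. ennreal (a i) * P i) = \<top>"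
    using a[of j] by (auto simp: ennreal_mult_eq_top_iff intro!: bexI[of _ j])
  show ?thesis unfolding top by simp
next
  case P_finite: False
  show ?thesis
  proof (cases "\<exists>j<k. N j = \<top>")
    case True
    then obtain j where "j < k" "N j = \<top>" by blast
    then have "c = -\<infinity>" using c[of j] P_finite by (cases "P j") auto
    then show ?thesis by simp
  next
    case N_finite: False
    have as_real: "(\<Sum>i<k. ennreal (a i) * Q i) = ennreal (\<Sum>i<k. a i * enn2real (Q i))"
      if "\<And>i. i < k \<Longrightarrow> Q i < \<top>" for Q
    proof -
      have "(\<Sum>i<k. ennreal (a i) * Q i) = (\<Sum>i<k. ennreal (a i * enn2real (Q i)))"
        using a that by (intro sum.cong refl) (simp add: ennreal_mult less_imp_le)
      also have "\<dots> = ennreal (\<Sum>i<k. a i * enn2real (Q i))"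
        using a by (intro sum_ennreal) (simp add: less_imp_le)
      finally show ?thesis .
    qed
    have "c \<le> ereal (\<Sum>i<k. a i * (enn2real (P i) - enn2real (N i)))"
    proof (rule le_ereal_convex_combination)
      fix i assume i: "i < k"
      obtain p q where "P i = ennreal p" "N i = ennreal q" "0 \<le> p" "0 \<le> q"
        using P_finite N_finite i
        by (cases "P i" rule: ennreal_cases; cases "N i" rule: ennreal_cases) auto
      then show "c \<le> ereal (enn2real (P i) - enn2real (N i))" using c[OF i] by simp
    qed (use a s in \<open>auto simp: less_imp_le\<close>)
    also have "\<dots> = enn2ereal (\<Sum>i<k. ennreal (a i) * P i) - enn2ereal (\<Sum>i<k. ennreal (a i) * N i)"
    proof -
      have "0 \<le> (\<Sum>i<k. a i * enn2real (Q i))" for Q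
        using a by (intro sum_nonneg) (simp add: less_imp_le)
      then show ?thesis
        using P_finite N_finite by (simp add: as_real less_top right_diff_distrib sum_subtractf)
    qed
    finally show ?thesis .
  qed
qed

lemma convex_combination_ereal_diff_le:
  fixes P N :: "nat \<Rightarrow> ennreal" and p n :: ennreal
  assumes a: "\<And>i. i < k \<Longrightarrow> a i \<ge> 0" and s: "(\<Sum>i<k. a i) = 1"
    and P: "\<And>i. i < k \<Longrightarrow> P i \<le> p" and N: "\<And>i. i < k \<Longrightarrow> n \<le> N i"
  shows "enn2ereal (\<Sum>i<k. ennreal (a i) * P i) - enn2ereal (\<Sum>i<k. ennreal (a i) * N i)
    \<le> enn2ereal p - enn2ereal n"
proof -
  have one: "(\<Sum>i<k. ennreal (a i)) = 1" using a s by (subst sum_ennreal) auto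
  have "(\<Sum>i<k. ennreal (a i) * P i) \<le> (\<Sum>i<k. ennreal (a i) * p)"
    using P by (intro sum_mono mult_left_mono) auto
  also have "\<dots> = p" using one by (simp add: sum_distrib_right[symmetric])
  finally have P_le: "(\<Sum>i<k. ennreal (a i) * P i) \<le> p" .
  have "n = (\<Sum>i<k. ennreal (a i) * n)" using one by (simp add: sum_distrib_right[symmetric])
  also have "\<dots> \<le> (\<Sum>i<k. ennreal (a i) * N i)"
    using N by (intro sum_mono mult_left_mono) auto
  finally have N_ge: "n \<le> (\<Sum>i<k. ennreal (a i) * N i)" .
  from P_le N_ge show ?thesis
    by (intro ereal_minus_mono) (auto simp: less_eq_ennreal.rep_eq[symmetric])
qed

lemma ereal_integral_convolution_discrete_measure_ge:
  fixes M :: "'a::ordered_euclidean_space measure" and f :: "'a \<Rightarrow> ereal"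
  assumes "finite_measure M" "sets M = sets borel" "\<And>i. i < k \<Longrightarrow> a i > 0" "(\<Sum>i<k. a i) = 1"
    and [measurable]: "f \<in> borel_measurable borel"
    and "\<And>i. i < k \<Longrightarrow> c \<le> ereal_integral M (\<lambda>z. f (z + x i))"
  shows "c \<le> ereal_integral (M \<star> discrete_measure k a x) f"
proof -
  have a: "\<And>i. i < k \<Longrightarrow> a i \<ge> 0" using assms(3) by (simp add: less_imp_le)
  show ?thesis
    using assms(6)
    by (simp add: ereal_integral_eq_pos_integral_diff pos_integral_convolution_discrete_measure[OF assms(1,2) a]
        le_convex_combination_ereal_diff[OF assms(3,4)])
qed

lemma ereal_integral_convolution_discrete_measure_le:
  fixes M :: "'a::ordered_euclidean_space measure" and f g :: "'a \<Rightarrow> ereal"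
  assumes "finite_measure M" "sets M = sets borel" "\<And>i. i < k \<Longrightarrow> a i \<ge> 0" "(\<Sum>i<k. a i) = 1"
    and [measurable]: "f \<in> borel_measurable borel"
    and "\<And>i z. i < k \<Longrightarrow> f (z + x i) \<le> g z"
  shows "ereal_integral (M \<star> discrete_measure k a x) f \<le> ereal_integral M g"
  using assms(6)
  by (simp add: ereal_integral_eq_pos_integral_diff pos_integral_convolution_discrete_measure[OF assms(1-3)]
      convex_combination_ereal_diff_le[OF assms(3,4)] pos_integral_mono)

lemma eln_mono: "d \<le> e \<Longrightarrow> eln d \<le> eln e"
  unfolding eln_def by auto

lemma borel_measurable_eln_infdist [measurable]:
  "(\<lambda>y. eln (infdist y A)) \<in> borel_measurable borel"
proof -
  have "eln \<in> borel_measurable borel" unfolding eln_def by measurable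
  moreover have "(\<lambda>y. infdist y A) \<in> borel_measurable borel"
    by (intro borel_measurable_continuous_onI continuous_intros)
  ultimately show ?thesis by measurable
qed

lemma infdist_add:
  fixes z c :: "'a::real_normed_vector"
  shows "infdist (z + c) A = infdist z ((\<lambda>b. b - c) ` A)"
  unfolding infdist_def by (simp add: image_image dist_norm algebra_simps)

definition codebooks :: "nat \<Rightarrow> 'a set set" where
  "codebooks n = {A. finite A \<and> A \<noteq> {} \<and> card A \<le> n}"

lemma log_quant_error_eq_INF_codebooks:
  "log_quant_error L n = (INF A \<in> codebooks n. ereal_integral L (\<lambda>x. eln (infdist x A)))"
  by (simp add: log_quant_error_def codebooks_def)

lemma image_in_codebooks: "A \<in> codebooks n \<Longrightarrow> f ` A \<in> codebooks n"
  by (auto simp: codebooks_def intro: order.trans[OF card_image_le])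

lemma UN_in_codebooks:
  assumes "\<And>i. i < k \<Longrightarrow> A i \<in> codebooks n" and "k \<ge> 1"
  shows "(\<Union>i<k. A i) \<in> codebooks (k * n)"
proof -
  have "card (\<Union>i<k. A i) \<le> (\<Sum>i<k. card (A i))" by (rule card_UN_le) simp
  also have "\<dots> \<le> k * n" using assms(1) sum_bounded_above[of "{..<k}" "\<lambda>i. card (A i)" n]
    by (simp add: codebooks_def)
  finally have "card (\<Union>i<k. A i) \<le> k * n" .
  moreover have "A 0 \<subseteq> (\<Union>i<k. A i)" using assms(2) by (intro UN_upper) simp
  then have "(\<Union>i<k. A i) \<noteq> {}" using assms(1)[of 0] assms(2) by (auto simp: codebooks_def)
  moreover have "finite (\<Union>i<k. A i)" using assms(1) by (auto simp: codebooks_def)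
  ultimately show ?thesis by (simp add: codebooks_def)
qed

lemma decseq_log_quant_error: "decseq (log_quant_error L)"
  unfolding decseq_def log_quant_error_def by (auto intro!: INF_superset_mono)

lemma log_quant_error_le_convolution:
  fixes M :: "'a::ordered_euclidean_space measure"
  assumes "finite_measure M" "sets M = sets borel" "\<And>i. i < k \<Longrightarrow> a i > 0" "(\<Sum>i<k. a i) = 1"
  shows "log_quant_error M n \<le> log_quant_error (M \<star> discrete_measure k a x) n"
  unfolding log_quant_error_eq_INF_codebooks
proof (rule INF_greatest)
  fix B :: "'a set" assume B: "B \<in> codebooks n"
  show "(INF A\<in>codebooks n. ereal_integral M (\<lambda>z. eln (infdist z A)))
    \<le> ereal_integral (M \<star> discrete_measure k a x) (\<lambda>y. eln (infdist y B))"
  proof (rule ereal_integral_convolution_discrete_measure_ge[OF assms])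
    fix i
    from B have "(\<lambda>b. b - x i) ` B \<in> codebooks n" by (rule image_in_codebooks)
    then show "(INF A\<in>codebooks n. ereal_integral M (\<lambda>z. eln (infdist z A)))
        \<le> ereal_integral M (\<lambda>z. eln (infdist (z + x i) B))"
      unfolding infdist_add by (rule INF_lower)
  qed measurable
qed

lemma log_quant_error_convolution_le:
  fixes M :: "'a::ordered_euclidean_space measure"
  assumes "finite_measure M" "sets M = sets borel" "\<And>i. i < k \<Longrightarrow> a i \<ge> 0" "(\<Sum>i<k. a i) = 1"
  shows "log_quant_error (M \<star> discrete_measure k a x) (k * n) \<le> log_quant_error M n"
  unfolding log_quant_error_eq_INF_codebooks
proof (rule INF_greatest)
  let ?C = "M \<star> discrete_measure k a x"
  fix A :: "'a set" assume A: "A \<in> codebooks n"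
  define B where "B = (\<Union>i<k. (\<lambda>b. b + x i) ` A)"
  have "k \<ge> 1" using assms(4) by (cases k) auto
  with A have "B \<in> codebooks (k * n)"
    unfolding B_def by (intro UN_in_codebooks image_in_codebooks)
  then have "(INF B\<in>codebooks (k * n). ereal_integral ?C (\<lambda>y. eln (infdist y B)))
      \<le> ereal_integral ?C (\<lambda>y. eln (infdist y B))"
    by (rule INF_lower)
  also have "\<dots> \<le> ereal_integral M (\<lambda>z. eln (infdist z A))"
  proof (rule ereal_integral_convolution_discrete_measure_le[OF assms])
    fix i z assume "i < k"
    then have "(\<lambda>b. b + x i) ` A \<subseteq> B" by (auto simp: B_def)
    then have "infdist (z + x i) B \<le> infdist (z + x i) ((\<lambda>b. b + x i) ` A)"
      using A by (intro infdist_mono) (auto simp: codebooks_def)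
    also have "\<dots> = infdist z A" by (simp add: infdist_add image_image)
    finally show "eln (infdist (z + x i) B) \<le> eln (infdist z A)" by (rule eln_mono)
  qed measurable
  finally show "(INF B\<in>codebooks (k * n). ereal_integral ?C (\<lambda>y. eln (infdist y B)))
      \<le> ereal_integral M (\<lambda>z. eln (infdist z A))" .
qed

theorem lemma3p10:
  fixes \<mu> :: "(real ^ 'm) measure"
    and k :: nat and a :: "nat \<Rightarrow> real" and x :: "nat \<Rightarrow> real ^ 'm"
    and D D' :: ereal
  assumes "prob_space \<mu>" and "sets \<mu> = sets borel"
    and "\<And>i. i < k \<Longrightarrow> a i > 0"
    and "(\<Sum>i<k. a i) = 1"
    and "has_quant_dim0 \<mu> D"
    and "has_quant_dim0 (\<mu> \<star> discrete_measure k a x) D'"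
  shows "D' = D"
proof (rule interleaved_ln_div_limits_eq)
  have finite: "finite_measure \<mu>" using assms(1) by (simp add: prob_space_def)
  show "k \<ge> 1" using assms(4) by (cases k) auto
  show "log_quant_error \<mu> n \<le> log_quant_error (\<mu> \<star> discrete_measure k a x) n" for n
    using finite assms(2-4) by (rule log_quant_error_le_convolution)
  show "log_quant_error (\<mu> \<star> discrete_measure k a x) (k * n) \<le> log_quant_error \<mu> n" for n
    using finite assms(2-4) by (intro log_quant_error_convolution_le) (auto simp: less_imp_le)
qed (use assms(5,6) in \<open>auto simp: has_quant_dim0_def D0_seq_def[abs_def] decseq_log_quant_error\<close>)

end
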